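(* Let $Z\in\mathbb{R}^{n\times m}$ and $w\in\mathbb{R}^n$ be fixed, let $\theta^*\in\mathbb{R}^m$ with $S^*=\operatorname{supp}(\theta^* )$, and set $y=Z\theta^*+w$. Let $\rho_\lambda$ satisfy Condition (R) and assume that for some $\delta\in(0,1)$, $$\frac1n|\langle w,Zu\rangle|\le\delta\Big[\frac{1}{2n}\|Zu\|_2^2+\rho_\lambda(u)\Big]\quad\text{for all }u\in\mathbb{R}^m.$$ Let $\xi=(1+\delta)/(1-\delta)$ and assume $\gamma^2:=\gamma^2_\rho(Z,S^*;\xi)>0$. Then every $\hat\theta\in\arg\min_{\theta\in\mathbb{R}^m}\frac{1}{2n}\|y-Z\theta\|_2^2+\rho_\lambda(\theta)$ satisfies $$\|\hat\theta-\theta^*\|_2\le\frac{2\xi}{\gamma^2}\rho_\lambda'(0^+)\|\theta^*\|_0^{1/2},\qquad\|\hat\theta-\theta^*\|_1\le\frac{2\xi(1+\xi)}{\gamma^2}\rho_\lambda'(0^+)\|\theta^*\|_0.$$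
   Context: $\rho_\lambda(u)=\sum_i\rho_\lambda(|u_i|)$ for vectors. Condition (R): $\rho_\lambda:[0,\infty)\to[0,\infty)$ is concave, nondecreasing, right-differentiable at $0$, $\rho_\lambda(0)=0$, $0<\rho_\lambda'(0^+)<\infty$ (right derivative at $0$), and there are constants $a,b\ge0$ independent of $\lambda$ with $\rho_\lambda(x)\ge\min\{a\lambda x,b\lambda^2\}$. For $A\subset[m]$ and $u\in\mathbb{R}^m$, $u_A$ denotes $u$ restricted to the coordinates in $A$. Cone: $\mathcal{C}_\rho(A,\xi)=\{u\in\mathbb{R}^m:\rho_\lambda(u_{A^c})\le\xi\rho_\lambda(u_A)\}$. Generalized restricted eigenvalue constant: $\gamma^2_\rho(Z,A;\xi)=\inf\{\|Zu\|_2^2/(n\|u\|_2^2):u\in\mathcal{C}_\rho(A,\xi),u\neq0\}$. *)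

theory Defs
  imports "HOL-Analysis.Analysis"
begin

text \<open>A penalty family: rho lam x is rho_lambda(x) for x \<ge> 0.\<close>

definition rho_deriv0 :: "(real \<Rightarrow> real \<Rightarrow> real) \<Rightarrow> real \<Rightarrow> real" where
  "rho_deriv0 rho lam = (THE D. (rho lam has_real_derivative D) (at 0 within {0..}))"

definition cond_R :: "(real \<Rightarrow> real \<Rightarrow> real) \<Rightarrow> bool" where
  "cond_R rho \<longleftrightarrow>
     (\<exists>a b. a \<ge> 0 \<and> b \<ge> 0 \<and>
       (\<forall>lam > 0.
          (\<forall>x \<ge> 0. rho lam x \<ge> 0) \<and>
          concave_on {0..} (rho lam) \<and>
          mono_on {0..} (rho lam) \<and>
          rho lam 0 = 0 \<and>
          (\<exists>D. (rho lam has_real_derivative D) (at 0 within {0..})) \<and>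
          0 < rho_deriv0 rho lam \<and>
          (\<forall>x \<ge> 0. rho lam x \<ge> min (a * lam * x) (b * lam\<^sup>2))))"

definition rho_on :: "(real \<Rightarrow> real \<Rightarrow> real) \<Rightarrow> real \<Rightarrow> 'm::finite set \<Rightarrow> real^'m \<Rightarrow> real" where
  "rho_on rho lam A u = (\<Sum>i\<in>A. rho lam \<bar>u $ i\<bar>)"

definition rho_vec :: "(real \<Rightarrow> real \<Rightarrow> real) \<Rightarrow> real \<Rightarrow> real^'m::finite \<Rightarrow> real" where
  "rho_vec rho lam u = rho_on rho lam UNIV u"

definition rho_cone :: "(real \<Rightarrow> real \<Rightarrow> real) \<Rightarrow> real \<Rightarrow> 'm::finite set \<Rightarrow> real \<Rightarrow> (real^'m) set" where
  "rho_cone rho lam A xi = {u. rho_on rho lam (- A) u \<le> xi * rho_on rho lam A u}"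

text \<open>Generalized restricted eigenvalue constant, as an extended real (inf of empty set = +\<infinity>).\<close>
definition gamma2 :: "(real \<Rightarrow> real \<Rightarrow> real) \<Rightarrow> real \<Rightarrow> real^'m^'n \<Rightarrow> 'm::finite set \<Rightarrow> real \<Rightarrow> ereal" where
  "gamma2 rho lam Z A xi =
     Inf {ereal ((norm (Z *v u))\<^sup>2 / (real CARD('n::finite) * (norm u)\<^sup>2)) | u. u \<in> rho_cone rho lam A xi \<and> u \<noteq> 0}"

definition supp :: "real^'m::finite \<Rightarrow> 'm set" where
  "supp v = {i. v $ i \<noteq> 0}"

definition l0norm :: "real^'m::finite \<Rightarrow> nat" where
  "l0norm v = card (supp v)"

definition l1norm :: "real^'m::finite \<Rightarrow> real" where
  "l1norm v = (\<Sum>i\<in>UNIV. \<bar>v $ i\<bar>)"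

definition pen_obj :: "(real \<Rightarrow> real \<Rightarrow> real) \<Rightarrow> real \<Rightarrow> real^'m^'n \<Rightarrow> real^'n \<Rightarrow> real^'m \<Rightarrow> real" where
  "pen_obj rho lam Z y \<theta> =
     1 / (2 * real CARD('n::finite)) * (norm (y - Z *v \<theta>))\<^sup>2 + rho_vec rho lam (\<theta>::real^'m::finite)"

end

theory Submission
  imports Defs
begin

text \<open>
  Write \<open>u = \<theta>hat - \<theta>star\<close> and \<open>S = supp \<theta>star\<close>. Comparing the objective at \<open>\<theta>hat\<close> with its
  value at \<open>\<theta>star\<close> and absorbing the noise term gives the basic inequality
  \<open>\<parallel>Z u\<parallel>\<^sup>2 / 2n + \<rho>(u\<^bsub>-S\<^esub>) \<le> \<xi> \<rho>(u\<^sub>S)\<close>; this only uses that \<open>\<rho>\<close> is nondecreasing and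
  subadditive on \<open>[0,\<infinity>)\<close>. So \<open>u\<close> lies in the cone defining \<open>\<gamma>\<^sup>2\<close>, whence
  \<open>\<gamma>\<^sup>2 \<parallel>u\<parallel>\<^sup>2 \<le> \<parallel>Z u\<parallel>\<^sup>2 / n\<close>, while concavity gives \<open>\<rho>(x) \<le> \<rho>'(0\<^sup>+) x\<close> and hence
  \<open>\<rho>(u\<^sub>S) \<le> \<rho>'(0\<^sup>+) \<surd>s \<parallel>u\<parallel>\<close>; combining the two is the \<open>\<ell>\<^sub>2\<close> bound.
  The cone condition controls penalties rather than \<open>\<ell>\<^sub>1\<close> masses; Jensen's inequality at the scale
  \<open>T = \<parallel>u\<parallel> / \<surd>s\<close> together with \<open>x \<le> T \<rho>(x) / \<rho>(T) + x\<^sup>2 / 2T\<close> converts it into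
  \<open>\<parallel>u\<parallel>\<^sub>1 \<le> (1 + \<xi>) \<surd>s \<parallel>u\<parallel>\<close>, which yields the \<open>\<ell>\<^sub>1\<close> bound.
\<close>

lemma sum_UNIV_Compl_split:
  fixes g :: "'a::finite \<Rightarrow> 'b::comm_monoid_add"
  shows "sum g UNIV = sum g A + sum g (- A)"
  by (metis Compl_partition finite sum.union_disjoint Compl_disjoint)

lemma power2_norm_vec_eq_sum: "(norm (u :: real^'m::finite))\<^sup>2 = (\<Sum>i\<in>UNIV. (u $ i)\<^sup>2)"
  unfolding power2_norm_eq_inner inner_vec_def by (simp add: power2_eq_square)

lemma sum_abs_le_sqrt_card_mult_L2:
  fixes g :: "'a \<Rightarrow> real"
  shows "(\<Sum>i\<in>A. \<bar>g i\<bar>) \<le> sqrt (card A) * sqrt (\<Sum>i\<in>A. (g i)\<^sup>2)"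
proof -
  have "(\<Sum>i\<in>A. \<bar>g i\<bar>)\<^sup>2 \<le> card A * (\<Sum>i\<in>A. (g i)\<^sup>2)"
    using sum_squared_le_sum_of_squares[of "\<lambda>i. \<bar>g i\<bar>" A] by (simp add: mult.commute)
  then show ?thesis
    by (metis real_le_rsqrt real_sqrt_mult sum_abs_ge_zero)
qed

lemma sum_abs_le_sqrt_card_mult_norm:
  fixes u :: "real^'m::finite"
  shows "(\<Sum>i\<in>A. \<bar>u $ i\<bar>) \<le> sqrt (card A) * norm u"
proof -
  have "(\<Sum>i\<in>A. (u $ i)\<^sup>2) \<le> (norm u)\<^sup>2"
    unfolding power2_norm_vec_eq_sum sum_UNIV_Compl_split[of _ A] by (simp add: sum_nonneg)
  then have "sqrt (\<Sum>i\<in>A. (u $ i)\<^sup>2) \<le> norm u"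
    using real_sqrt_le_mono by fastforce
  then show ?thesis
    by (intro order_trans[OF sum_abs_le_sqrt_card_mult_L2] mult_left_mono) simp_all
qed

locale concave_penalty =
  fixes f :: "real \<Rightarrow> real" and D :: real
  assumes concave: "concave_on {0..} f"
    and mono: "mono_on {0..} f"
    and zero [simp]: "f 0 = 0"
    and deriv0: "(f has_real_derivative D) (at 0 within {0..})"
    and deriv0_pos: "0 < D"
begin

lemma monoD: "0 \<le> x \<Longrightarrow> x \<le> y \<Longrightarrow> f x \<le> f y"
  using mono by (simp add: mono_on_def)

lemma nonneg: "0 \<le> x \<Longrightarrow> 0 \<le> f x"
  using monoD[of 0 x] by simp

lemma scale_le:
  assumes "0 \<le> t" "t \<le> 1" "0 \<le> x"
  shows "t * f x \<le> f (t * x)"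
  using concave_onD[OF concave assms(1,2), of 0 x] assms by simp

lemma chord_slope_antimono:
  assumes "0 \<le> x" "x \<le> y"
  shows "x * f y \<le> y * f x"
proof (cases "y = 0")
  case False
  with assms have y: "0 < y" by simp
  have "x / y * f y \<le> f (x / y * y)"
    using assms y by (intro scale_le) auto
  with y show ?thesis by (simp add: field_simps)
qed (use assms in simp)

lemma subadditive:
  assumes "0 \<le> x" "0 \<le> y"
  shows "f (x + y) \<le> f x + f y"
proof (cases "x + y = 0")
  case False
  with assms have xy: "0 < x + y" by simp
  have "x * f (x + y) \<le> (x + y) * f x" "y * f (x + y) \<le> (x + y) * f y"
    using assms by (auto intro: chord_slope_antimono)
  then have "(x + y) * f (x + y) \<le> (x + y) * (f x + f y)"
    by (simp add: algebra_simps)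
  with xy show ?thesis by simp
qed (use assms in \<open>simp add: add_nonneg_eq_0_iff\<close>)

lemma difference_quotient_tendsto: "((\<lambda>h. f h / h) \<longlongrightarrow> D) (at_right 0)"
  using deriv0 by (simp add: has_field_derivative_iff at_within_Ici_at_right)

lemma le_deriv0_mult:
  assumes "0 \<le> x"
  shows "f x \<le> D * x"
proof (cases "x = 0")
  case False
  with assms have x: "0 < x" by simp
  have "\<forall>\<^sub>F h in at_right 0. f x / x \<le> f h / h"
    using eventually_at_right_real[OF x]
  proof (rule eventually_mono)
    fix h assume "h \<in> {0<..<x}"
    then show "f x / x \<le> f h / h"
      using chord_slope_antimono[of h x] x by (simp add: field_simps)
  qed
  then have "f x / x \<le> D"
    by (intro tendsto_lowerbound[OF difference_quotient_tendsto]) simp_all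
  with x show ?thesis by (simp add: field_simps)
qed simp

lemma pos:
  assumes "0 < x"
  shows "0 < f x"
proof (rule ccontr)
  assume "\<not> 0 < f x"
  with nonneg[of x] assms have fx: "f x = 0" by simp
  have "\<forall>\<^sub>F h in at_right 0. f h / h \<le> 0"
    using eventually_at_right_real[OF assms]
  proof (rule eventually_mono)
    fix h assume "h \<in> {0<..<x}"
    then show "f h / h \<le> 0"
      using monoD[of h x] fx by (simp add: divide_nonpos_pos)
  qed
  then have "D \<le> 0"
    by (intro tendsto_upperbound[OF difference_quotient_tendsto]) simp_all
  with deriv0_pos show False by simp
qed

lemma le_ratio_plus_square:
  assumes T: "0 < T" and x: "0 \<le> x"
  shows "x \<le> T * f x / f T + x\<^sup>2 / (2 * T)"
proof (cases "x \<le> T")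
  case True
  then have "x \<le> T * f x / f T"
    using chord_slope_antimono[OF x True] pos[OF T] by (simp add: field_simps)
  moreover have "0 \<le> x\<^sup>2 / (2 * T)"
    using T by simp
  ultimately show ?thesis by linarith
next
  case False
  then have "T \<le> T * f x / f T"
    using monoD[of T x] pos[OF T] T by (simp add: field_simps)
  moreover have "2 * T * x \<le> x\<^sup>2 + T\<^sup>2"
    using sum_squares_bound[of T x] by (simp add: mult.commute)
  then have "x \<le> T / 2 + x\<^sup>2 / (2 * T)"
    using T by (simp add: field_simps power2_eq_square)
  ultimately show ?thesis using T by linarith
qed

lemma sum_le_card_mult_mean:
  assumes "finite A" "A \<noteq> {}" "\<And>i. i \<in> A \<Longrightarrow> 0 \<le> x i"
  shows "(\<Sum>i\<in>A. f (x i)) \<le> card A * f ((\<Sum>i\<in>A. x i) / card A)"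
proof -
  have c: "0 < real (card A)" using assms by (simp add: card_gt_0_iff)
  have "(\<Sum>i\<in>A. 1 / card A * f (x i)) \<le> f (\<Sum>i\<in>A. (1 / card A) *\<^sub>R x i)"
    using assms by (intro concave_on_sum[OF _ _ concave]) auto
  with c show ?thesis
    by (simp add: sum_distrib_left[symmetric] sum_divide_distrib[symmetric] field_simps)
qed

end

lemma rho_vec_split: "rho_vec rho lam u = rho_on rho lam A u + rho_on rho lam (- A) u"
  unfolding rho_vec_def rho_on_def by (rule sum_UNIV_Compl_split)

lemma gamma2_le:
  fixes Z :: "real^'m::finite^'n::finite"
  assumes "u \<in> rho_cone rho lam A \<xi>" "u \<noteq> 0"
  shows "gamma2 rho lam Z A \<xi> \<le> ereal ((norm (Z *v u))\<^sup>2 / (real CARD('n) * (norm u)\<^sup>2))"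
  unfolding gamma2_def by (rule Inf_lower) (use assms in blast)

lemma norm_le_of_gamma2:
  fixes Z :: "real^'m::finite^'n::finite"
  assumes cone: "u \<in> rho_cone rho lam A \<xi>" and g: "gamma2 rho lam Z A \<xi> = ereal g" "0 < g"
    and bound: "(norm (Z *v u))\<^sup>2 / (2 * real CARD('n)) \<le> c * norm u" and c: "0 \<le> c"
  shows "norm u \<le> 2 * c / g"
proof (cases "u = 0")
  case False
  then have r: "0 < norm u" by simp
  have "g \<le> (norm (Z *v u))\<^sup>2 / (real CARD('n) * (norm u)\<^sup>2)"
    using gamma2_le[OF cone False, of Z] g by simp
  then have "g * (norm u)\<^sup>2 \<le> (norm (Z *v u))\<^sup>2 / real CARD('n)"
    using r by (simp add: field_simps)
  also have "\<dots> \<le> 2 * c * norm u"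
    using bound by (simp add: field_simps)
  finally have "g * norm u \<le> 2 * c"
    using r by (simp add: power2_eq_square)
  with g show ?thesis by (simp add: field_simps)
qed (use g c in simp)

text \<open>Condition (R) at a fixed \<open>\<lambda>\<close>, without the lower bound \<open>min {a\<lambda>x, b\<lambda>\<^sup>2}\<close>,
  which the error bounds do not use.\<close>

locale rho_penalty = concave_penalty "rho lam" D
  for rho :: "real \<Rightarrow> real \<Rightarrow> real" and lam D

lemma rho_penalty_of_cond_R:
  assumes "cond_R rho" "0 < lam"
  shows "rho_penalty rho lam (rho_deriv0 rho lam)"
proof -
  from assms obtain D where conc: "concave_on {0..} (rho lam)" and mono: "mono_on {0..} (rho lam)"
    and zero: "rho lam 0 = 0" and D: "(rho lam has_real_derivative D) (at 0 within {0..})"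
    and pos: "0 < rho_deriv0 rho lam"
    unfolding cond_R_def by blast
  have "rho_deriv0 rho lam = D"
    unfolding rho_deriv0_def
  proof (rule the_equality)
    show "(rho lam has_real_derivative D) (at 0 within {0..})" by (fact D)
    show "E = D" if "(rho lam has_real_derivative E) (at 0 within {0..})" for E
      using has_field_derivative_unique[OF that D] by (simp add: at_within_Ici_at_right)
  qed
  with conc mono zero D pos show ?thesis
    unfolding rho_penalty_def by unfold_locales simp_all
qed

context rho_penalty
begin

lemma rho_on_nonneg: "0 \<le> rho_on rho lam A u"
  unfolding rho_on_def by (intro sum_nonneg nonneg) simp

lemma rho_on_le_deriv0_mult: "rho_on rho lam A u \<le> D * sqrt (card A) * norm u"
proof -
  have "rho_on rho lam A u \<le> (\<Sum>i\<in>A. D * \<bar>u $ i\<bar>)"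
    unfolding rho_on_def by (intro sum_mono le_deriv0_mult) simp
  also have "\<dots> = D * (\<Sum>i\<in>A. \<bar>u $ i\<bar>)"
    by (simp add: sum_distrib_left)
  also have "\<dots> \<le> D * (sqrt (card A) * norm u)"
    using deriv0_pos by (intro mult_left_mono sum_abs_le_sqrt_card_mult_norm) simp
  finally show ?thesis by (simp add: mult.assoc)
qed

lemma rho_vec_diff_le:
  fixes \<theta> \<theta>' :: "real^'m::finite"
  assumes supp: "supp \<theta>' \<subseteq> A"
  shows "rho_vec rho lam \<theta>' - rho_vec rho lam \<theta>
         \<le> rho_on rho lam A (\<theta> - \<theta>') - rho_on rho lam (- A) (\<theta> - \<theta>')"
proof -
  have zero_off: "\<theta>' $ i = 0" if "i \<in> - A" for i
    using supp that by (auto simp: supp_def)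
  have "rho_on rho lam (- A) \<theta>' = 0"
    unfolding rho_on_def by (simp add: zero_off)
  moreover have "rho_on rho lam (- A) \<theta> = rho_on rho lam (- A) (\<theta> - \<theta>')"
    unfolding rho_on_def by (rule sum.cong) (simp_all add: zero_off)
  moreover have "rho_on rho lam A \<theta>' \<le> rho_on rho lam A \<theta> + rho_on rho lam A (\<theta> - \<theta>')"
    unfolding rho_on_def sum.distrib[symmetric]
  proof (rule sum_mono)
    fix i
    have "rho lam \<bar>\<theta>' $ i\<bar> \<le> rho lam (\<bar>\<theta> $ i\<bar> + \<bar>(\<theta> - \<theta>') $ i\<bar>)"
      by (rule monoD) auto
    also have "\<dots> \<le> rho lam \<bar>\<theta> $ i\<bar> + rho lam \<bar>(\<theta> - \<theta>') $ i\<bar>"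
      by (rule subadditive) auto
    finally show "rho lam \<bar>\<theta>' $ i\<bar> \<le> rho lam \<bar>\<theta> $ i\<bar> + rho lam \<bar>(\<theta> - \<theta>') $ i\<bar>" .
  qed
  ultimately show ?thesis
    using rho_vec_split[of rho lam \<theta>' A] rho_vec_split[of rho lam \<theta> A] by linarith
qed

lemma penalized_argmin_basic_inequality:
  fixes Z :: "real^'m::finite^'n::finite" and w :: "real^'n"
  assumes "supp \<theta>' \<subseteq> A"
    and argmin: "pen_obj rho lam Z (Z *v \<theta>' + w) \<theta> \<le> pen_obj rho lam Z (Z *v \<theta>' + w) \<theta>'"
  shows "(norm (Z *v (\<theta> - \<theta>')))\<^sup>2 / (2 * real CARD('n)) + rho_on rho lam (- A) (\<theta> - \<theta>')
         \<le> (w \<bullet> (Z *v (\<theta> - \<theta>'))) / real CARD('n) + rho_on rho lam A (\<theta> - \<theta>')"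
proof -
  define u where "u = \<theta> - \<theta>'"
  have residual: "Z *v \<theta>' + w - Z *v \<theta> = w - Z *v u"
    by (simp add: u_def matrix_vector_mult_diff_distrib algebra_simps)
  have "pen_obj rho lam Z (Z *v \<theta>' + w) \<theta> = (norm w)\<^sup>2 / (2 * real CARD('n))
      - (w \<bullet> (Z *v u)) / real CARD('n) + (norm (Z *v u))\<^sup>2 / (2 * real CARD('n)) + rho_vec rho lam \<theta>"
    unfolding pen_obj_def residual
    by (simp add: power2_norm_eq_inner inner_diff_left inner_diff_right inner_commute field_simps)
  moreover have "pen_obj rho lam Z (Z *v \<theta>' + w) \<theta>' = (norm w)\<^sup>2 / (2 * real CARD('n)) + rho_vec rho lam \<theta>'"
    unfolding pen_obj_def by simp
  ultimately have "(norm (Z *v u))\<^sup>2 / (2 * real CARD('n)) - (w \<bullet> (Z *v u)) / real CARD('n)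
      \<le> rho_vec rho lam \<theta>' - rho_vec rho lam \<theta>"
    using argmin by linarith
  with rho_vec_diff_le[OF assms(1), of \<theta>] show ?thesis
    unfolding u_def by linarith
qed

lemma estimation_error_cone_inequality:
  fixes Z :: "real^'m::finite^'n::finite" and w :: "real^'n"
  assumes "supp \<theta>' \<subseteq> A" and \<delta>: "0 \<le> \<delta>" "\<delta> < 1"
    and noise: "1 / real CARD('n) * \<bar>w \<bullet> (Z *v (\<theta> - \<theta>'))\<bar>
      \<le> \<delta> * (1 / (2 * real CARD('n)) * (norm (Z *v (\<theta> - \<theta>')))\<^sup>2 + rho_vec rho lam (\<theta> - \<theta>'))"
    and argmin: "pen_obj rho lam Z (Z *v \<theta>' + w) \<theta> \<le> pen_obj rho lam Z (Z *v \<theta>' + w) \<theta>'"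
  shows "(norm (Z *v (\<theta> - \<theta>')))\<^sup>2 / (2 * real CARD('n)) + rho_on rho lam (- A) (\<theta> - \<theta>')
         \<le> (1 + \<delta>) / (1 - \<delta>) * rho_on rho lam A (\<theta> - \<theta>')"
proof -
  define q where "q = (norm (Z *v (\<theta> - \<theta>')))\<^sup>2 / (2 * real CARD('n))"
  define x where "x = (w \<bullet> (Z *v (\<theta> - \<theta>'))) / real CARD('n)"
  define a where "a = rho_on rho lam A (\<theta> - \<theta>')"
  define c where "c = rho_on rho lam (- A) (\<theta> - \<theta>')"
  have "q + c \<le> x + a"
    using penalized_argmin_basic_inequality[OF assms(1) argmin] unfolding q_def x_def a_def c_def .
  moreover have "x \<le> \<bar>w \<bullet> (Z *v (\<theta> - \<theta>'))\<bar> / real CARD('n)"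
    unfolding x_def by (simp add: divide_right_mono)
  then have "x \<le> \<delta> * (q + a + c)"
    using noise rho_vec_split[of rho lam "\<theta> - \<theta>'" A]
    unfolding q_def a_def c_def by (simp add: add.assoc)
  ultimately have "(1 - \<delta>) * (q + c) \<le> (1 + \<delta>) * a"
    by (simp add: algebra_simps)
  with \<delta> show ?thesis
    unfolding q_def a_def c_def by (simp add: field_simps)
qed

lemma rho_vec_eq_0_iff: "rho_vec rho lam u = 0 \<longleftrightarrow> u = 0"
proof
  assume "rho_vec rho lam u = 0"
  then have "rho lam \<bar>u $ i\<bar> = 0" for i
    using sum_nonneg_eq_0_iff[of UNIV "\<lambda>i. rho lam \<bar>u $ i\<bar>"] nonneg
    by (simp add: rho_vec_def rho_on_def)
  then have "u $ i = 0" for i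
    using pos[of "\<bar>u $ i\<bar>"] by fastforce
  then show "u = 0"
    by (simp add: vec_eq_iff)
qed (simp add: rho_vec_def rho_on_def)

lemma rho_on_le_card_mult:
  assumes "A \<noteq> {}"
  shows "rho_on rho lam A u \<le> card A * rho lam (norm u / sqrt (card A))"
proof -
  have c: "0 < real (card A)" using assms by (simp add: card_gt_0_iff)
  have "rho_on rho lam A u \<le> card A * rho lam ((\<Sum>i\<in>A. \<bar>u $ i\<bar>) / card A)"
    unfolding rho_on_def using assms by (intro sum_le_card_mult_mean) auto
  also have "\<dots> \<le> card A * rho lam (norm u / sqrt (card A))"
  proof -
    have "(\<Sum>i\<in>A. \<bar>u $ i\<bar>) / card A \<le> sqrt (card A) * norm u / card A"
      using sum_abs_le_sqrt_card_mult_norm[of u A] c by (simp add: divide_right_mono)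
    also have "\<dots> = norm u / sqrt (card A)"
      using c by (metis real_div_sqrt less_imp_le times_divide_eq_left divide_divide_eq_right mult.commute)
    finally show ?thesis
      using c by (intro mult_left_mono monoD) (simp_all add: sum_nonneg)
  qed
  finally show ?thesis .
qed

lemma sum_abs_le_ratio_plus_square:
  assumes "0 < T"
  shows "(\<Sum>i\<in>B. \<bar>u $ i\<bar>) \<le> T * rho_on rho lam B u / rho lam T + (\<Sum>i\<in>B. (u $ i)\<^sup>2) / (2 * T)"
proof -
  have "(\<Sum>i\<in>B. \<bar>u $ i\<bar>) \<le> (\<Sum>i\<in>B. T * rho lam \<bar>u $ i\<bar> / rho lam T + (u $ i)\<^sup>2 / (2 * T))"
    using le_ratio_plus_square[OF assms, of "\<bar>u $ _\<bar>"] by (intro sum_mono) simp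
  also have "\<dots> = T * rho_on rho lam B u / rho lam T + (\<Sum>i\<in>B. (u $ i)\<^sup>2) / (2 * T)"
    unfolding rho_on_def by (simp add: sum.distrib sum_distrib_left sum_divide_distrib)
  finally show ?thesis .
qed

lemma l1norm_le_in_rho_cone:
  fixes u :: "real^'m::finite"
  assumes \<xi>: "0 \<le> \<xi>" and cone: "u \<in> rho_cone rho lam A \<xi>"
  shows "l1norm u \<le> (1 + \<xi>) * sqrt (card A) * norm u"
proof (cases "u = 0")
  case True
  then show ?thesis by (simp add: l1norm_def)
next
  case False
  have off_le: "rho_on rho lam (- A) u \<le> \<xi> * rho_on rho lam A u"
    using cone by (simp add: rho_cone_def)
  have "A \<noteq> {}"
  proof
    assume "A = {}"
    with off_le have "rho_vec rho lam u \<le> 0"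
      by (simp add: rho_vec_def rho_on_def)
    with rho_on_nonneg[of UNIV u] have "rho_vec rho lam u = 0"
      by (simp add: rho_vec_def)
    with False show False by (simp add: rho_vec_eq_0_iff)
  qed
  define \<sigma> where "\<sigma> = sqrt (card A)"
  define r where "r = norm u"
  define a where "a = sqrt (\<Sum>i\<in>A. (u $ i)\<^sup>2)"
  define b where "b = (\<Sum>i\<in>- A. (u $ i)\<^sup>2)"
  define T where "T = r / \<sigma>"
  have r: "0 < r" using False by (simp add: r_def)
  have \<sigma>: "0 < \<sigma>" using \<open>A \<noteq> {}\<close> by (simp add: \<sigma>_def card_gt_0_iff)
  have T: "0 < T" using r \<sigma> by (simp add: T_def)
  \<comment> \<open>Jensen bounds the penalty on \<open>A\<close> by \<open>\<sigma>\<^sup>2 \<rho>(T)\<close>; the cone transfers this to the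
    complement, where \<open>le_ratio_plus_square\<close> converts penalty back into \<open>\<ell>\<^sub>1\<close> mass.\<close>
  have "rho_on rho lam (- A) u \<le> \<xi> * (\<sigma>\<^sup>2 * rho lam T)"
    using off_le rho_on_le_card_mult[OF \<open>A \<noteq> {}\<close>, of u] \<xi>
    unfolding \<sigma>_def T_def r_def by (simp add: mult_left_mono order_trans)
  then have "T * rho_on rho lam (- A) u / rho lam T \<le> T * (\<xi> * (\<sigma>\<^sup>2 * rho lam T)) / rho lam T"
    using T pos[OF T] by (intro divide_right_mono mult_left_mono) simp_all
  also have "\<dots> = \<xi> * \<sigma> * r"
    using pos[OF T] \<sigma> by (simp add: T_def power2_eq_square)
  finally have "T * rho_on rho lam (- A) u / rho lam T \<le> \<xi> * \<sigma> * r" .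
  moreover have "b / (2 * T) = \<sigma> * b / (2 * r)"
    using \<sigma> by (simp add: T_def)
  ultimately have off_part: "(\<Sum>i\<in>- A. \<bar>u $ i\<bar>) \<le> \<xi> * \<sigma> * r + \<sigma> * b / (2 * r)"
    using sum_abs_le_ratio_plus_square[OF T, where B = "- A" and u = u] unfolding b_def by linarith
  have on_part: "(\<Sum>i\<in>A. \<bar>u $ i\<bar>) \<le> \<sigma> * a"
    unfolding \<sigma>_def a_def by (rule sum_abs_le_sqrt_card_mult_L2)
  have "a\<^sup>2 + b = r\<^sup>2"
    unfolding a_def b_def r_def power2_norm_vec_eq_sum sum_UNIV_Compl_split[of _ A]
    by (simp add: sum_nonneg)
  then have "2 * a * r + b \<le> 2 * r * r"
    using sum_squares_bound[of a r] by (simp add: power2_eq_square)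
  then have "\<sigma> * (a + b / (2 * r)) \<le> \<sigma> * r"
    using r \<sigma> by (intro mult_left_mono) (simp_all add: field_simps)
  moreover have "l1norm u = (\<Sum>i\<in>A. \<bar>u $ i\<bar>) + (\<Sum>i\<in>- A. \<bar>u $ i\<bar>)"
    unfolding l1norm_def by (rule sum_UNIV_Compl_split)
  ultimately show ?thesis
    using on_part off_part unfolding \<sigma>_def r_def by (simp add: algebra_simps)
qed

lemma error_bounds_of_cone_inequality:
  fixes Z :: "real^'m::finite^'n::finite"
  assumes \<xi>: "0 \<le> \<xi>" and gam: "0 < gamma2 rho lam Z A \<xi>"
    and ineq: "(norm (Z *v u))\<^sup>2 / (2 * real CARD('n)) + rho_on rho lam (- A) u \<le> \<xi> * rho_on rho lam A u"
  shows "ereal (norm u) \<le> ereal (2 * \<xi> * D * sqrt (card A)) / gamma2 rho lam Z A \<xi> \<and>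
         ereal (l1norm u) \<le> ereal (2 * \<xi> * (1 + \<xi>) * D * card A) / gamma2 rho lam Z A \<xi>"
proof -
  define c where "c = \<xi> * (D * sqrt (card A))"
  have c: "0 \<le> c" using \<xi> deriv0_pos by (simp add: c_def)
  have "0 \<le> (norm (Z *v u))\<^sup>2 / (2 * real CARD('n))" by simp
  with ineq have cone: "u \<in> rho_cone rho lam A \<xi>"
    unfolding rho_cone_def mem_Collect_eq by linarith
  have "(norm (Z *v u))\<^sup>2 / (2 * real CARD('n)) \<le> \<xi> * rho_on rho lam A u"
    using ineq rho_on_nonneg[of "- A" u] by linarith
  also have "\<dots> \<le> c * norm u"
    using rho_on_le_deriv0_mult[of A u] \<xi> unfolding c_def by (simp add: mult_left_mono mult.assoc)
  finally have fit: "(norm (Z *v u))\<^sup>2 / (2 * real CARD('n)) \<le> c * norm u" .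
  show ?thesis
  proof (cases "gamma2 rho lam Z A \<xi>")
    case PInf
    then have "u = 0" using gamma2_le[OF cone, of Z] by force
    with PInf show ?thesis by (simp add: l1norm_def)
  next
    case (real g)
    with gam have g: "0 < g" by simp
    have l2: "norm u \<le> 2 * c / g"
      by (rule norm_le_of_gamma2[OF cone real g fit c])
    have "l1norm u \<le> (1 + \<xi>) * sqrt (card A) * norm u"
      by (rule l1norm_le_in_rho_cone[OF \<xi> cone])
    also have "\<dots> \<le> (1 + \<xi>) * sqrt (card A) * (2 * c / g)"
      using l2 \<xi> by (intro mult_left_mono) simp_all
    also have "\<dots> = 2 * \<xi> * (1 + \<xi>) * D * card A / g"
      by (simp add: c_def algebra_simps)
    finally show ?thesis
      using l2 real g by (simp add: c_def mult.assoc)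
  qed (use gam in simp)
qed

end

theorem theorem8:
  fixes Z :: "real^'m::finite^'n::finite" and w :: "real^'n" and \<theta>star \<theta>hat :: "real^'m"
    and rho :: "real \<Rightarrow> real \<Rightarrow> real" and lam \<delta> :: real
  assumes R: "cond_R rho" and lam: "lam > 0"
    and \<delta>: "0 < \<delta>" "\<delta> < 1"
    and noise: "\<forall>u :: real^'m. 1 / real CARD('n) * \<bar>w \<bullet> (Z *v u)\<bar>
                  \<le> \<delta> * (1 / (2 * real CARD('n)) * (norm (Z *v u))\<^sup>2 + rho_vec rho lam u)"
    and gam: "gamma2 rho lam Z (supp \<theta>star) ((1 + \<delta>) / (1 - \<delta>)) > 0"
    and argmin: "\<forall>\<theta>. pen_obj rho lam Z (Z *v \<theta>star + w) \<theta>hat \<le> pen_obj rho lam Z (Z *v \<theta>star + w) \<theta>"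
  shows "(ereal (norm (\<theta>hat - \<theta>star))
           \<le> ereal (2 * ((1 + \<delta>) / (1 - \<delta>)) * rho_deriv0 rho lam * sqrt (real (l0norm \<theta>star)))
             / gamma2 rho lam Z (supp \<theta>star) ((1 + \<delta>) / (1 - \<delta>))) \<and>
         (ereal (l1norm (\<theta>hat - \<theta>star))
           \<le> ereal (2 * ((1 + \<delta>) / (1 - \<delta>)) * (1 + (1 + \<delta>) / (1 - \<delta>)) * rho_deriv0 rho lam * real (l0norm \<theta>star))
             / gamma2 rho lam Z (supp \<theta>star) ((1 + \<delta>) / (1 - \<delta>)))"
proof -
  define \<xi> where "\<xi> = (1 + \<delta>) / (1 - \<delta>)"
  define D where "D = rho_deriv0 rho lam"
  interpret rho_penalty rho lam D
    unfolding D_def using R lam by (rule rho_penalty_of_cond_R)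
  have "(norm (Z *v (\<theta>hat - \<theta>star)))\<^sup>2 / (2 * real CARD('n))
      + rho_on rho lam (- supp \<theta>star) (\<theta>hat - \<theta>star)
      \<le> \<xi> * rho_on rho lam (supp \<theta>star) (\<theta>hat - \<theta>star)"
    unfolding \<xi>_def
    using estimation_error_cone_inequality[OF _ _ _ noise[rule_format] argmin[rule_format]] \<delta> by simp
  moreover have "0 \<le> \<xi>" using \<delta> by (simp add: \<xi>_def)
  ultimately show ?thesis
    using error_bounds_of_cone_inequality gam unfolding \<xi>_def D_def l0norm_def by blast
qed

end
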